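(* In the setting below, suppose there exists $t_0\in(0,1]$ such that both $Z_1(t_0)$ and $Z_2(t_0)$ are tangent to the coordinate axes. Then both $Z_1(t)$ and $Z_2(t)$ stay on the corresponding axes for all $t\in(0,1]$.
   Context: Planar three-body problem with masses $m_1=m_2=m_3=1$, $\chi=\{q=(q_1,q_2,q_3)\in(\mathbb{R}^2)^3: q_1+q_2+q_3=0\}$, action $\mathcal{A}(q)=\int_0^1\big(\tfrac12\sum|\dot q_i|^2+\sum_{i<j}\frac{1}{|q_i-q_j|}\big)dt$. Let $Q_{S_4}=\{q: q_1=q_2=(-a_2,0),\ q_3=(2a_2,0),\ a_2\ge0\}$ and $Q_{E_1}=\{q: q_1=(0,-2b_1),\ q_2=(-b_2,b_1),\ q_3=(b_2,b_1),\ b_1,b_2\in\mathbb{R}\}$. Let $q$ minimize $\mathcal{A}$ over $\{q\in H^1([0,1],\chi): q(0)\in Q_{S_4},\ q(1)\in Q_{E_1}\}$; it is collision-free for $t\in(0,1]$ and there satisfies Newton's equations $\ddot q_i=\sum_{j\ne i}\frac{q_j-q_i}{|q_j-q_i|^3}$. Jacobi coordinates: $Z_1=q_1-q_2$, $Z_2=q_3-\frac{q_1+q_2}{2}$. A vector function $Z$ is tangent to the $x$-axis (resp. $y$-axis) at $t_0$ if $Z_y(t_0)=\dot Z_y(t_0)=0$ (resp. $Z_x(t_0)=\dot Z_x(t_0)=0$); "the corresponding axes" means, for each $i$, the axis to which $Z_i$ is tangent at $t_0$. *)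

theory Defs
  imports "HOL-Analysis.Analysis"
begin

text \<open>Planar positions are points of real \<times> real (Euclidean norm).\<close>

text \<open>H^1([0,1]) path: f is the indefinite integral of a square-integrable
(weak derivative) g on [0,1].\<close>
definition H1_path :: "(real \<Rightarrow> real \<times> real) \<Rightarrow> bool" where
  "H1_path f \<longleftrightarrow> (\<exists>g. g absolutely_integrable_on {0..1} \<and>
       (\<lambda>t. (norm (g t))\<^sup>2) integrable_on {0..1} \<and>
       (\<forall>t\<in>{0..1}. (g has_integral (f t - f 0)) {0..t}))"

definition pot :: "real \<times> real \<Rightarrow> real \<times> real \<Rightarrow> ennreal" where
  "pot x y = (if x = y then \<infinity> else ennreal (1 / dist x y))"

text \<open>Lagrangian action (values in [0,\<infinity>]); the velocities are the derivatives,
which exist a.e. for H^1 paths.\<close>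
definition action ::
  "(real \<Rightarrow> real \<times> real) \<Rightarrow> (real \<Rightarrow> real \<times> real) \<Rightarrow> (real \<Rightarrow> real \<times> real) \<Rightarrow> ennreal" where
  "action q1 q2 q3 =
     (\<integral>\<^sup>+ t\<in>{0..1}.
        (ennreal ((1/2) * ((norm (vector_derivative q1 (at t)))\<^sup>2
                          + (norm (vector_derivative q2 (at t)))\<^sup>2
                          + (norm (vector_derivative q3 (at t)))\<^sup>2))
         + pot (q1 t) (q2 t) + pot (q1 t) (q3 t) + pot (q2 t) (q3 t)) \<partial>lborel)"

definition in_QS4 :: "real \<times> real \<Rightarrow> real \<times> real \<Rightarrow> real \<times> real \<Rightarrow> bool" where
  "in_QS4 x1 x2 x3 \<longleftrightarrow> (\<exists>a2::real. a2 \<ge> 0 \<and> x1 = (-a2, 0) \<and> x2 = (-a2, 0) \<and> x3 = (2*a2, 0))"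

definition in_QE1 :: "real \<times> real \<Rightarrow> real \<times> real \<Rightarrow> real \<times> real \<Rightarrow> bool" where
  "in_QE1 x1 x2 x3 \<longleftrightarrow> (\<exists>b1 b2::real. x1 = (0, -2*b1) \<and> x2 = (-b2, b1) \<and> x3 = (b2, b1))"

definition admissible ::
  "(real \<Rightarrow> real \<times> real) \<Rightarrow> (real \<Rightarrow> real \<times> real) \<Rightarrow> (real \<Rightarrow> real \<times> real) \<Rightarrow> bool" where
  "admissible q1 q2 q3 \<longleftrightarrow>
     H1_path q1 \<and> H1_path q2 \<and> H1_path q3 \<and>
     (\<forall>t\<in>{0..1}. q1 t + q2 t + q3 t = 0) \<and>
     in_QS4 (q1 0) (q2 0) (q3 0) \<and> in_QE1 (q1 1) (q2 1) (q3 1)"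

definition action_minimizer ::
  "(real \<Rightarrow> real \<times> real) \<Rightarrow> (real \<Rightarrow> real \<times> real) \<Rightarrow> (real \<Rightarrow> real \<times> real) \<Rightarrow> bool" where
  "action_minimizer q1 q2 q3 \<longleftrightarrow> admissible q1 q2 q3 \<and>
     (\<forall>p1 p2 p3. admissible p1 p2 p3 \<longrightarrow> action q1 q2 q3 \<le> action p1 p2 p3)"

definition force :: "real \<times> real \<Rightarrow> real \<times> real \<Rightarrow> real \<times> real" where
  "force x y = (1 / (dist y x) ^ 3) *\<^sub>R (y - x)"

definition jacobiZ1 :: "real \<times> real \<Rightarrow> real \<times> real \<Rightarrow> real \<times> real" where
  "jacobiZ1 x1 x2 = x1 - x2"

definition jacobiZ2 :: "real \<times> real \<Rightarrow> real \<times> real \<Rightarrow> real \<times> real \<Rightarrow> real \<times> real" where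
  "jacobiZ2 x1 x2 x3 = x3 - (1/2) *\<^sub>R (x1 + x2)"

text \<open>Axes: True = x-axis, False = y-axis. A point lies on the x-axis iff its
y-coordinate vanishes, and on the y-axis iff its x-coordinate vanishes.\<close>
definition on_axis :: "bool \<Rightarrow> real \<times> real \<Rightarrow> bool" where
  "on_axis ax p \<longleftrightarrow> (if ax then snd p = 0 else fst p = 0)"

definition tangent_to_axis :: "bool \<Rightarrow> (real \<Rightarrow> real \<times> real) \<Rightarrow> real \<Rightarrow> bool" where
  "tangent_to_axis ax Z t0 \<longleftrightarrow>
     on_axis ax (Z t0) \<and> on_axis ax (vector_derivative Z (at t0 within {0..1}))"

end

theory Submission
  imports Defs
begin

text \<open>Written as a first-order system for positions and velocities, Newton's equations have a
  vector field that is Lipschitz on every set of configurations whose mutual distances are bounded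
  below; by Gronwall's inequality, two solutions that agree at one time therefore agree on every
  interval on which both are collision-free. A reflection in a coordinate axis, possibly combined
  with exchanging bodies 1 and 2, maps solutions to solutions. When the centre of mass is at the
  origin (the only property of the minimizer that is needed), the tangency of \<open>Z\<^sub>1\<close> and
  \<open>Z\<^sub>2\<close> to their axes at \<open>t\<^sub>0\<close> says exactly that the state at \<open>t\<^sub>0\<close> is fixed by such a
  symmetry. Hence the whole solution is fixed by it, which means that \<open>Z\<^sub>1\<close> and \<open>Z\<^sub>2\<close> stay on
  their axes.\<close>

lemma gronwall_forward_nonpos:
  fixes E E' :: "real \<Rightarrow> real"
  assumes "t0 \<le> t1" and "continuous_on {t0..t1} E"
    and "\<And>s. t0 < s \<Longrightarrow> s < t1 \<Longrightarrow> (E has_real_derivative E' s) (at s) \<and> E' s \<le> C * E s"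
    and "E t0 \<le> 0"
  shows "E t1 \<le> 0"
proof -
  define h where "h s = - (E s * exp (- C * s))" for s
  have "h t0 \<le> h t1"
  proof (rule DERIV_nonneg_imp_increasing_open[OF \<open>t0 \<le> t1\<close>])
    fix s assume s: "t0 < s" "s < t1"
    then have "(h has_real_derivative (C * E s - E' s) * exp (- C * s)) (at s)"
      unfolding h_def using assms(3) by (auto intro!: derivative_eq_intros simp: algebra_simps)
    moreover have "0 \<le> (C * E s - E' s) * exp (- C * s)"
      using assms(3)[OF s] by simp
    ultimately show "\<exists>y. (h has_real_derivative y) (at s) \<and> 0 \<le> y" by blast
  qed (unfold h_def, intro continuous_intros assms(2))
  then have "E t1 * exp (- C * t1) \<le> E t0 * exp (- C * t0)"
    by (simp add: h_def)
  also have "\<dots> \<le> 0"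
    using assms(4) by (simp add: mult_nonpos_nonneg)
  finally show ?thesis by (simp add: mult_le_0_iff)
qed

lemma gronwall_zero:
  fixes E E' :: "real \<Rightarrow> real"
  assumes t0: "t0 \<in> {a..b}"
    and deriv: "\<And>t. t \<in> {a..b} \<Longrightarrow> (E has_real_derivative E' t) (at t within {a..b})"
    and bound: "\<And>t. t \<in> {a..b} \<Longrightarrow> 0 \<le> E t \<and> \<bar>E' t\<bar> \<le> C * E t"
    and "E t0 = 0" and t: "t \<in> {a..b}"
  shows "E t = 0"
proof -
  have deriv_at: "(E has_real_derivative E' s) (at s)" if "a < s" "s < b" for s
    using deriv[of s] that at_within_interior[of s "{a..b}"] by auto
  have cont: "continuous_on {a..b} E"
    using deriv by (meson continuous_on_eq_continuous_within DERIV_continuous)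
  have "E t \<le> 0"
  proof (cases "t0 \<le> t")
    case True
    show ?thesis
    proof (rule gronwall_forward_nonpos[OF True, of E E' C])
      show "continuous_on {t0..t} E"
        using cont by (rule continuous_on_subset) (use t0 t in auto)
      fix s assume "t0 < s" "s < t"
      with t0 t show "(E has_real_derivative E' s) (at s) \<and> E' s \<le> C * E s"
        using deriv_at bound[of s] by auto
    qed (simp add: \<open>E t0 = 0\<close>)
  next
    case False
    show ?thesis
    proof (rule gronwall_forward_nonpos[of "- t0" "- t" "\<lambda>s. E (- s)" "\<lambda>s. - E' (- s)" C, simplified])
      show "t \<le> t0" using False by simp
      show "continuous_on {- t0..- t} (\<lambda>s. E (- s))"
        by (intro continuous_on_compose2[OF cont] continuous_intros) (use t0 t in auto)
      fix s assume "- t0 < s" "s < - t"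
      with t0 t have s: "a < - s" "- s < b" by auto
      show "((\<lambda>s. E (- s)) has_real_derivative - E' (- s)) (at s) \<and> - E' (- s) \<le> C * E (- s)"
        using DERIV_chain2[OF deriv_at[OF s] DERIV_minus[OF DERIV_ident]] bound[of "- s"] s by auto
    qed (simp add: \<open>E t0 = 0\<close>)
  qed
  then show ?thesis using bound[OF t] by linarith
qed

lemma has_real_derivative_inner_self:
  fixes f :: "real \<Rightarrow> 'a::real_inner"
  assumes "(f has_vector_derivative f') (at t within S)"
  shows "((\<lambda>t. inner (f t) (f t)) has_real_derivative 2 * inner (f t) f') (at t within S)"
  using bounded_bilinear.has_vector_derivative[OF bounded_bilinear_inner assms assms]
  by (simp add: has_real_derivative_iff_has_vector_derivative inner_commute)

lemma lipschitz_ode_unique: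
  fixes y z :: "real \<Rightarrow> 'a::real_inner"
  assumes lip: "L-lipschitz_on U f" and t0: "t0 \<in> {a..b}"
    and y: "\<And>t. t \<in> {a..b} \<Longrightarrow> (y has_vector_derivative f (y t)) (at t within {a..b}) \<and> y t \<in> U"
    and z: "\<And>t. t \<in> {a..b} \<Longrightarrow> (z has_vector_derivative f (z t)) (at t within {a..b}) \<and> z t \<in> U"
    and "y t0 = z t0" and t: "t \<in> {a..b}"
  shows "y t = z t"
proof -
  define E where "E t = inner (y t - z t) (y t - z t)" for t
  define E' where "E' t = 2 * inner (y t - z t) (f (y t) - f (z t))" for t
  have "E t = 0"
  proof (rule gronwall_zero[OF t0, of E E' "2 * L"])
    fix s assume s: "s \<in> {a..b}"
    show "(E has_real_derivative E' s) (at s within {a..b})"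
      unfolding E_def E'_def
      by (intro has_real_derivative_inner_self has_vector_derivative_diff) (use y z s in auto)
    have "\<bar>E' s\<bar> \<le> 2 * (norm (y s - z s) * norm (f (y s) - f (z s)))"
      unfolding E'_def by (simp add: abs_mult Cauchy_Schwarz_ineq2)
    also have "\<dots> \<le> 2 * (norm (y s - z s) * (L * norm (y s - z s)))"
      using lipschitz_onD[OF lip, of "y s" "z s"] y[OF s] z[OF s]
      by (intro mult_left_mono) (auto simp: dist_norm)
    also have "\<dots> = 2 * L * E s"
      by (simp add: E_def power2_norm_eq_inner[symmetric] power2_eq_square)
    finally show "0 \<le> E s \<and> \<bar>E' s\<bar> \<le> 2 * L * E s"
      by (simp add: E_def)
  qed (use t \<open>y t0 = z t0\<close> in \<open>simp_all add: E_def\<close>)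
  then show ?thesis by (simp add: E_def)
qed

lemma inverse_product_le_inverse_cube:
  fixes d x y z :: real
  assumes "0 < d" "d \<le> x" "d \<le> y" "d \<le> z"
  shows "1 / (x * y * z) \<le> 1 / d ^ 3"
proof -
  have "d * d * d \<le> x * y * z"
    using assms by (intro mult_mono) auto
  then show ?thesis
    using assms by (simp add: frac_le power3_eq_cube)
qed

lemma inverse_cube_difference_bound:
  fixes A B d :: real
  assumes "0 < d" "d \<le> A" "d \<le> B"
  shows "\<bar>1 / A ^ 3 - 1 / B ^ 3\<bar> * B \<le> 3 / d ^ 3 * \<bar>A - B\<bar>"
proof -
  have pos: "0 < A" "0 < B" using assms by auto
  have "1 / A ^ 3 - 1 / B ^ 3 = (B - A) * (1 / (A * A * A) + 1 / (A * A * B) + 1 / (A * B * B)) / B"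
    using pos by (simp add: field_simps power3_eq_cube)
  then have "\<bar>1 / A ^ 3 - 1 / B ^ 3\<bar> * B = \<bar>A - B\<bar> * (1 / (A * A * A) + 1 / (A * A * B) + 1 / (A * B * B))"
    using pos by (simp add: abs_mult abs_minus_commute)
  also have "\<dots> \<le> \<bar>A - B\<bar> * (3 / d ^ 3)"
    using inverse_product_le_inverse_cube[OF assms(1), of A A A] inverse_product_le_inverse_cube[OF assms(1), of A A B]
      inverse_product_le_inverse_cube[OF assms(1), of A B B] assms
    by (intro mult_left_mono) auto
  finally show ?thesis by (simp add: mult.commute)
qed

lemma inverse_square_law_lipschitz:
  fixes a b :: "'a::real_normed_vector"
  assumes "0 < d" "d \<le> norm a" "d \<le> norm b"
  shows "norm ((1 / norm a ^ 3) *\<^sub>R a - (1 / norm b ^ 3) *\<^sub>R b) \<le> 4 / d ^ 3 * norm (a - b)"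
proof -
  have "(1 / norm a ^ 3) *\<^sub>R a - (1 / norm b ^ 3) *\<^sub>R b
      = (1 / norm a ^ 3) *\<^sub>R (a - b) + (1 / norm a ^ 3 - 1 / norm b ^ 3) *\<^sub>R b"
    by (simp add: algebra_simps)
  then have "norm ((1 / norm a ^ 3) *\<^sub>R a - (1 / norm b ^ 3) *\<^sub>R b)
      \<le> 1 / norm a ^ 3 * norm (a - b) + \<bar>1 / norm a ^ 3 - 1 / norm b ^ 3\<bar> * norm b"
    using norm_triangle_ineq[of "(1 / norm a ^ 3) *\<^sub>R (a - b)" "(1 / norm a ^ 3 - 1 / norm b ^ 3) *\<^sub>R b"]
    by simp
  also have "\<dots> \<le> 1 / d ^ 3 * norm (a - b) + 3 / d ^ 3 * norm (a - b)"
  proof (intro add_mono mult_right_mono order_trans[OF inverse_cube_difference_bound[OF assms]])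
    show "1 / norm a ^ 3 \<le> 1 / d ^ 3"
      using inverse_product_le_inverse_cube[OF assms(1) assms(2) assms(2) assms(2)]
      by (simp add: power3_eq_cube)
    show "3 / d ^ 3 * \<bar>norm a - norm b\<bar> \<le> 3 / d ^ 3 * norm (a - b)"
      using assms(1) by (intro mult_left_mono norm_triangle_ineq3) simp
  qed simp
  finally show ?thesis by (simp add: field_simps)
qed

lemma force_lipschitz:
  assumes "0 < d" "d \<le> dist x y" "d \<le> dist x' y'"
  shows "norm (force x y - force x' y') \<le> 4 / d ^ 3 * (norm (x - x') + norm (y - y'))"
proof -
  have "norm (force x y - force x' y') \<le> 4 / d ^ 3 * norm ((y - x) - (y' - x'))"
    unfolding force_def dist_norm
    by (rule inverse_square_law_lipschitz) (use assms in \<open>auto simp: dist_norm norm_minus_commute\<close>)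
  also have "\<dots> \<le> 4 / d ^ 3 * (norm (x - x') + norm (y - y'))"
    using norm_triangle_ineq4[of "y - y'" "x - x'"] assms(1)
    by (intro mult_left_mono) (simp_all add: algebra_simps)
  finally show ?thesis .
qed

type_synonym config = "(real \<times> real) \<times> (real \<times> real) \<times> (real \<times> real)"

definition acceleration :: "config \<Rightarrow> config" where
  "acceleration x = (case x of (x1, x2, x3) \<Rightarrow>
     (force x1 x2 + force x1 x3, force x2 x1 + force x2 x3, force x3 x1 + force x3 x2))"

definition separation :: "config \<Rightarrow> real" where
  "separation x = (case x of (x1, x2, x3) \<Rightarrow> min (dist x1 x2) (min (dist x1 x3) (dist x2 x3)))"

definition newton_field :: "config \<times> config \<Rightarrow> config \<times> config" where
  "newton_field s = (snd s, acceleration (fst s))"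

lemma force_sum_lipschitz:
  assumes "0 < d" "d \<le> dist a b" "d \<le> dist a c" "d \<le> dist a' b'" "d \<le> dist a' c'"
    and "norm (a - a') \<le> r" "norm (b - b') \<le> r" "norm (c - c') \<le> r"
  shows "norm ((force a b + force a c) - (force a' b' + force a' c')) \<le> 16 / d ^ 3 * r"
proof -
  have "norm ((force a b + force a c) - (force a' b' + force a' c'))
      \<le> norm (force a b - force a' b') + norm (force a c - force a' c')"
    by (rule order_trans[OF _ norm_triangle_ineq]) (simp add: algebra_simps)
  also have "\<dots> \<le> 4 / d ^ 3 * (norm (a - a') + norm (b - b')) + 4 / d ^ 3 * (norm (a - a') + norm (c - c'))"
    using force_lipschitz[of d a b a' b'] force_lipschitz[of d a c a' c'] assms by auto
  also have "\<dots> \<le> 4 / d ^ 3 * (r + r) + 4 / d ^ 3 * (r + r)"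
    using assms by (intro add_mono mult_left_mono) auto
  finally show ?thesis by simp
qed

lemma acceleration_lipschitz:
  assumes "0 < d"
  shows "(48 / d ^ 3)-lipschitz_on {x. d \<le> separation x} acceleration"
proof (rule lipschitz_onI)
  fix x y assume "x \<in> {x. d \<le> separation x}" "y \<in> {x. d \<le> separation x}"
  moreover obtain x1 x2 x3 y1 y2 y3 where xy: "x = (x1, x2, x3)" "y = (y1, y2, y3)"
    by (cases x, cases y) auto
  ultimately have sep: "d \<le> dist x1 x2" "d \<le> dist x1 x3" "d \<le> dist x2 x3"
    "d \<le> dist y1 y2" "d \<le> dist y1 y3" "d \<le> dist y2 y3"
    by (auto simp: separation_def)
  define r where "r = dist x y"
  have r: "norm (x1 - y1) \<le> r" "norm (x2 - y2) \<le> r" "norm (x3 - y3) \<le> r"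
    unfolding r_def xy dist_norm
    by (auto intro: order_trans[OF _ norm_snd_le] norm_fst_le norm_snd_le)
  let ?c = "\<lambda>a b c a' b' c'. norm ((force a b + force a c) - (force a' b' + force a' c'))"
  have "?c x1 x2 x3 y1 y2 y3 \<le> 16 / d ^ 3 * r" "?c x2 x1 x3 y2 y1 y3 \<le> 16 / d ^ 3 * r"
    "?c x3 x1 x2 y3 y1 y2 \<le> 16 / d ^ 3 * r"
    using sep r by (intro force_sum_lipschitz[OF assms]; simp add: dist_commute)+
  moreover have "dist (acceleration x) (acceleration y)
      \<le> ?c x1 x2 x3 y1 y2 y3 + (?c x2 x1 x3 y2 y1 y3 + ?c x3 x1 x2 y3 y1 y2)"
    unfolding dist_norm xy acceleration_def
    by (auto intro!: order_trans[OF norm_Pair_le] add_mono)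
  ultimately have "dist (acceleration x) (acceleration y) \<le> 48 / d ^ 3 * r"
    by simp
  then show "dist (acceleration x) (acceleration y) \<le> 48 / d ^ 3 * dist x y"
    by (simp add: r_def)
qed (use assms in simp)

lemma newton_field_lipschitz:
  assumes "0 < d"
  shows "(1 + 48 / d ^ 3)-lipschitz_on {s. d \<le> separation (fst s)} newton_field"
proof (rule lipschitz_onI)
  fix s s' :: "config \<times> config" assume "s \<in> {s. d \<le> separation (fst s)}" "s' \<in> {s. d \<le> separation (fst s)}"
  then have "dist (acceleration (fst s)) (acceleration (fst s')) \<le> 48 / d ^ 3 * dist (fst s) (fst s')"
    using lipschitz_onD[OF acceleration_lipschitz[OF assms]] by auto
  also have "\<dots> \<le> 48 / d ^ 3 * dist s s'"
    using assms by (intro mult_left_mono) (auto simp: dist_fst_le)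
  finally show "dist (newton_field s) (newton_field s') \<le> (1 + 48 / d ^ 3) * dist s s'"
    unfolding newton_field_def dist_norm
    using norm_Pair_le[of "snd s - snd s'" "acceleration (fst s) - acceleration (fst s')"]
      dist_snd_le[of s s']
    by (simp add: dist_norm algebra_simps)
qed (use assms in simp)

lemma continuous_on_separation: "continuous_on A separation"
  unfolding separation_def case_prod_beta by (intro continuous_intros)

lemma newton_collision_free_unique:
  fixes Y Z :: "real \<Rightarrow> config \<times> config"
  assumes I: "is_interval I" "I \<subseteq> S" "t0 \<in> I" "t \<in> I"
    and Y: "\<And>t. t \<in> I \<Longrightarrow> (Y has_vector_derivative newton_field (Y t)) (at t within S) \<and> 0 < separation (fst (Y t))"
    and Z: "\<And>t. t \<in> I \<Longrightarrow> (Z has_vector_derivative newton_field (Z t)) (at t within S) \<and> 0 < separation (fst (Z t))"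
    and "Y t0 = Z t0"
  shows "Y t = Z t"
proof -
  define a where "a = min t0 t"
  define b where "b = max t0 t"
  have ab: "a \<le> b" "t0 \<in> {a..b}" "t \<in> {a..b}" by (auto simp: a_def b_def)
  have sub: "{a..b} \<subseteq> I"
    using I unfolding is_interval_1 a_def b_def by (metis atLeastAtMost_iff min_def max_def subsetI)
  have derivs: "(Y has_vector_derivative newton_field (Y s)) (at s within {a..b})"
    "(Z has_vector_derivative newton_field (Z s)) (at s within {a..b})" if "s \<in> {a..b}" for s
    using Y Z that sub I(2) by (meson has_vector_derivative_within_subset subsetD)+
  define m where "m s = min (separation (fst (Y s))) (separation (fst (Z s)))" for s
  have "continuous_on {a..b} Y" "continuous_on {a..b} Z"
    using derivs has_vector_derivative_continuous continuous_on_eq_continuous_within by blast+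
  then have "continuous_on {a..b} m"
    unfolding m_def
    by (intro continuous_intros continuous_on_compose2[OF continuous_on_separation, of _ "\<lambda>s. fst (_ s)"]) auto
  then obtain s where s: "s \<in> {a..b}" and min: "\<And>r. r \<in> {a..b} \<Longrightarrow> m s \<le> m r"
    using continuous_attains_inf[of "{a..b}" m] ab by auto
  have "0 < m s" using Y Z s sub by (auto simp: m_def)
  show ?thesis
  proof (rule lipschitz_ode_unique[where y = Y and z = Z, OF newton_field_lipschitz[OF \<open>0 < m s\<close>] ab(2) _ _ \<open>Y t0 = Z t0\<close> ab(3)])
    fix r assume "r \<in> {a..b}"
    with derivs min show "(Y has_vector_derivative newton_field (Y r)) (at r within {a..b}) \<and> Y r \<in> {y. m s \<le> separation (fst y)}"
      and "(Z has_vector_derivative newton_field (Z r)) (at r within {a..b}) \<and> Z r \<in> {y. m s \<le> separation (fst y)}"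
      by (fastforce simp: m_def)+
  qed
qed

lemma newton_solution_invariant:
  fixes Y :: "real \<Rightarrow> config \<times> config" and h :: "config \<Rightarrow> config"
  assumes h: "linear h" "\<And>x. acceleration (h x) = h (acceleration x)" "\<And>x. separation (h x) = separation x"
    and I: "is_interval I" "I \<subseteq> S" "t0 \<in> I" "t \<in> I"
    and Y: "\<And>t. t \<in> I \<Longrightarrow> (Y has_vector_derivative newton_field (Y t)) (at t within S) \<and> 0 < separation (fst (Y t))"
    and "map_prod h h (Y t0) = Y t0"
  shows "map_prod h h (Y t) = Y t"
proof (rule newton_collision_free_unique[where Y = "\<lambda>s. map_prod h h (Y s)" and Z = Y, OF I _ Y \<open>map_prod h h (Y t0) = Y t0\<close>])
  have "bounded_linear h" using h(1) by (simp add: linear_conv_bounded_linear)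
  fix s assume "s \<in> I"
  then have "((\<lambda>s. (h (fst (Y s)), h (snd (Y s)))) has_vector_derivative
      (h (fst (newton_field (Y s))), h (snd (newton_field (Y s))))) (at s within S)"
    using Y by (intro has_vector_derivative_Pair bounded_linear.has_vector_derivative[OF \<open>bounded_linear h\<close>]
        bounded_linear.has_vector_derivative[OF bounded_linear_fst]
        bounded_linear.has_vector_derivative[OF bounded_linear_snd]) auto
  then show "((\<lambda>s. map_prod h h (Y s)) has_vector_derivative newton_field (map_prod h h (Y s))) (at s within S)
      \<and> 0 < separation (fst (map_prod h h (Y s)))"
    using Y[OF \<open>s \<in> I\<close>] by (simp add: map_prod_def case_prod_beta newton_field_def h(2,3))
qed

lemma force_linear_isometry:
  assumes "linear \<sigma>" "\<And>x. norm (\<sigma> x) = norm x"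
  shows "force (\<sigma> x) (\<sigma> y) = \<sigma> (force x y)"
  using assms by (simp add: force_def dist_norm linear_diff[symmetric] linear_scale)

definition axis_reflection :: "bool \<Rightarrow> real \<times> real \<Rightarrow> real \<times> real" where
  "axis_reflection ax p = (if ax then (fst p, - snd p) else (- fst p, snd p))"

lemma linear_axis_reflection: "linear (axis_reflection ax)"
  by (rule linearI) (auto simp: axis_reflection_def)

lemma norm_axis_reflection: "norm (axis_reflection ax p) = norm p"
  by (cases p) (simp add: axis_reflection_def norm_Pair)

text \<open>The reflection fixing the axis of \<open>Z\<^sub>2\<close>; when \<open>Z\<^sub>1\<close> is to lie on the other axis,
  bodies 1 and 2 are swapped as well, so that \<open>Z\<^sub>1\<close> is reversed by the reflection and
  restored by the swap.\<close>
definition axis_symmetry :: "bool \<Rightarrow> bool \<Rightarrow> config \<Rightarrow> config" where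
  "axis_symmetry ax1 ax2 x = (case x of (x1, x2, x3) \<Rightarrow>
     if ax1 = ax2 then (axis_reflection ax2 x1, axis_reflection ax2 x2, axis_reflection ax2 x3)
     else (axis_reflection ax2 x2, axis_reflection ax2 x1, axis_reflection ax2 x3))"

lemma linear_axis_symmetry: "linear (axis_symmetry ax1 ax2)"
  using linear_axis_reflection[of ax2]
  by (intro linearI) (auto simp: axis_symmetry_def case_prod_beta linear_add linear_scale)

lemma acceleration_axis_symmetry:
  "acceleration (axis_symmetry ax1 ax2 x) = axis_symmetry ax1 ax2 (acceleration x)"
  using force_linear_isometry[OF linear_axis_reflection norm_axis_reflection, of ax2]
    linear_add[OF linear_axis_reflection, of ax2]
  by (cases x) (auto simp: axis_symmetry_def acceleration_def add.commute)

lemma separation_axis_symmetry: "separation (axis_symmetry ax1 ax2 x) = separation x"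
proof -
  have "dist (axis_reflection ax2 p) (axis_reflection ax2 q) = dist p q" for p q
    by (simp add: dist_norm linear_diff[OF linear_axis_reflection, symmetric] norm_axis_reflection)
  then show ?thesis
    by (cases x) (auto simp: axis_symmetry_def separation_def dist_commute min.left_commute)
qed

lemma axis_symmetry_fixed_iff:
  assumes "x1 + x2 + x3 = 0"
  shows "axis_symmetry ax1 ax2 (x1, x2, x3) = (x1, x2, x3)
    \<longleftrightarrow> on_axis ax1 (jacobiZ1 x1 x2) \<and> on_axis ax2 (jacobiZ2 x1 x2 x3)"
proof -
  obtain a1 b1 a2 b2 a3 b3 where x: "x1 = (a1, b1)" "x2 = (a2, b2)" "x3 = (a3, b3)"
    by (cases x1, cases x2, cases x3) auto
  have "a1 + a2 + a3 = 0" "b1 + b2 + b3 = 0"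
    using assms by (simp_all add: x prod_eq_iff)
  then show ?thesis
    unfolding x by (cases ax1; cases ax2)
      (auto simp: axis_symmetry_def axis_reflection_def on_axis_def jacobiZ1_def jacobiZ2_def)
qed

lemma tangent_to_axis_iff:
  assumes "(Z has_vector_derivative Z') (at t0 within {0..1})" "t0 \<in> {0..1}"
  shows "tangent_to_axis ax Z t0 \<longleftrightarrow> on_axis ax (Z t0) \<and> on_axis ax Z'"
  using vector_derivative_within_closed_interval[of 0 1 t0 Z Z'] assms
  by (simp add: tangent_to_axis_def)

lemma has_vector_derivative_vanishing:
  fixes f :: "real \<Rightarrow> 'a::real_normed_vector"
  assumes "(f has_vector_derivative f') (at t within {a..b})" "a < b" "t \<in> {a..b}"
    and "\<And>s. s \<in> {a..b} \<Longrightarrow> f s = 0"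
  shows "f' = 0"
proof -
  have "(f has_vector_derivative 0) (at t within {a..b})"
    by (rule has_vector_derivative_transform[OF \<open>t \<in> {a..b}\<close> _ has_vector_derivative_const])
       (use assms(4) in simp)
  then show ?thesis
    using vector_derivative_unique_within_closed_interval[of a b t f f' 0] assms by simp
qed

lemma axis_symmetry_fixes_tangent_state:
  fixes q1 q2 q3 :: "real \<Rightarrow> real \<times> real"
  assumes dq: "(q1 has_vector_derivative v1) (at t0 within {0..1})"
    "(q2 has_vector_derivative v2) (at t0 within {0..1})"
    "(q3 has_vector_derivative v3) (at t0 within {0..1})"
    and t0: "t0 \<in> {0..1}" and centre: "\<And>t. t \<in> {0..1} \<Longrightarrow> q1 t + q2 t + q3 t = 0"
    and tan1: "tangent_to_axis ax1 (\<lambda>t. jacobiZ1 (q1 t) (q2 t)) t0"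
    and tan2: "tangent_to_axis ax2 (\<lambda>t. jacobiZ2 (q1 t) (q2 t) (q3 t)) t0"
  shows "axis_symmetry ax1 ax2 (q1 t0, q2 t0, q3 t0) = (q1 t0, q2 t0, q3 t0)"
    and "axis_symmetry ax1 ax2 (v1, v2, v3) = (v1, v2, v3)"
proof -
  have "v1 + v2 + v3 = 0"
    by (rule has_vector_derivative_vanishing[of "\<lambda>t. q1 t + q2 t + q3 t" _ t0 0 1])
       (use dq t0 centre in \<open>auto intro!: derivative_intros\<close>)
  moreover have "((\<lambda>t. jacobiZ1 (q1 t) (q2 t)) has_vector_derivative jacobiZ1 v1 v2) (at t0 within {0..1})"
    unfolding jacobiZ1_def by (intro derivative_intros dq)
  then have "on_axis ax1 (jacobiZ1 (q1 t0) (q2 t0))" "on_axis ax1 (jacobiZ1 v1 v2)"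
    using tan1 tangent_to_axis_iff t0 by auto
  moreover have "((\<lambda>t. jacobiZ2 (q1 t) (q2 t) (q3 t)) has_vector_derivative jacobiZ2 v1 v2 v3) (at t0 within {0..1})"
    unfolding jacobiZ2_def
    by (intro derivative_intros bounded_linear.has_vector_derivative[OF bounded_linear_scaleR_right] dq)
  then have "on_axis ax2 (jacobiZ2 (q1 t0) (q2 t0) (q3 t0))" "on_axis ax2 (jacobiZ2 v1 v2 v3)"
    using tan2 tangent_to_axis_iff t0 by auto
  ultimately show "axis_symmetry ax1 ax2 (q1 t0, q2 t0, q3 t0) = (q1 t0, q2 t0, q3 t0)"
    and "axis_symmetry ax1 ax2 (v1, v2, v3) = (v1, v2, v3)"
    using axis_symmetry_fixed_iff[OF centre[OF t0]] axis_symmetry_fixed_iff[of v1 v2 v3] by blast+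
qed

theorem proposition5p5:
  fixes q1 q2 q3 v1 v2 v3 :: "real \<Rightarrow> real \<times> real"
  assumes minimizer: "action_minimizer q1 q2 q3"
    and collision_free: "\<forall>t\<in>{0<..1}. q1 t \<noteq> q2 t \<and> q1 t \<noteq> q3 t \<and> q2 t \<noteq> q3 t"
    and vel1: "\<forall>t\<in>{0<..1}. (q1 has_vector_derivative v1 t) (at t within {0..1})"
    and vel2: "\<forall>t\<in>{0<..1}. (q2 has_vector_derivative v2 t) (at t within {0..1})"
    and vel3: "\<forall>t\<in>{0<..1}. (q3 has_vector_derivative v3 t) (at t within {0..1})"
    and newton1: "\<forall>t\<in>{0<..1}. (v1 has_vector_derivative
                      (force (q1 t) (q2 t) + force (q1 t) (q3 t))) (at t within {0..1})"
    and newton2: "\<forall>t\<in>{0<..1}. (v2 has_vector_derivative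
                      (force (q2 t) (q1 t) + force (q2 t) (q3 t))) (at t within {0..1})"
    and newton3: "\<forall>t\<in>{0<..1}. (v3 has_vector_derivative
                      (force (q3 t) (q1 t) + force (q3 t) (q2 t))) (at t within {0..1})"
    and t0: "t0 \<in> {0<..1}"
    and tan1: "tangent_to_axis ax1 (\<lambda>t. jacobiZ1 (q1 t) (q2 t)) t0"
    and tan2: "tangent_to_axis ax2 (\<lambda>t. jacobiZ2 (q1 t) (q2 t) (q3 t)) t0"
  shows "\<forall>t\<in>{0<..1}. on_axis ax1 (jacobiZ1 (q1 t) (q2 t))
                    \<and> on_axis ax2 (jacobiZ2 (q1 t) (q2 t) (q3 t))"
proof
  define Y where "Y = (\<lambda>t. ((q1 t, q2 t, q3 t), (v1 t, v2 t, v3 t)))"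
  define h where "h = axis_symmetry ax1 ax2"
  have centre: "q1 t + q2 t + q3 t = 0" if "t \<in> {0..1}" for t
    using minimizer that by (simp add: action_minimizer_def admissible_def)
  have solution: "(Y has_vector_derivative newton_field (Y t)) (at t within {0..1}) \<and> 0 < separation (fst (Y t))"
    if "t \<in> {0<..1}" for t
    using that vel1 vel2 vel3 newton1 newton2 newton3 collision_free
    by (auto simp: Y_def newton_field_def acceleration_def separation_def intro!: has_vector_derivative_Pair)
  have "map_prod h h (Y t0) = Y t0"
    using axis_symmetry_fixes_tangent_state[OF vel1[rule_format, OF t0] vel2[rule_format, OF t0]
        vel3[rule_format, OF t0] _ centre tan1 tan2] t0
    by (simp add: Y_def h_def)
  fix t :: real assume t: "t \<in> {0<..1}"
  have "map_prod h h (Y t) = Y t"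
    by (rule newton_solution_invariant[OF _ _ _ _ _ t0 t solution \<open>map_prod h h (Y t0) = Y t0\<close>])
       (auto simp: h_def linear_axis_symmetry acceleration_axis_symmetry separation_axis_symmetry is_interval_1)
  then show "on_axis ax1 (jacobiZ1 (q1 t) (q2 t)) \<and> on_axis ax2 (jacobiZ2 (q1 t) (q2 t) (q3 t))"
    using axis_symmetry_fixed_iff centre[of t] t by (simp add: Y_def h_def)
qed

end
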